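(* Assume $\delta d_0>2$, let $t=d_0/2$, $\varepsilon_0=\frac{d_0}{2}-\frac1\delta$, and $\gamma=\left(1+\frac ct\right)^{-1}\frac{\delta d_0-1}{d_0-1}\alpha$. Let $G=(L\cup R,E)$ be a $(c,d,\alpha,\delta)$-bipartite expander with $L=[n]$, $C_0\subseteq\mathbb{F}_2^d$ a linear code of minimum distance $d_0$, $x\in\mathbb{F}_2^n$ and $y\in T(G,C_0)$ with $d_H(x,y)\le\gamma n$. Suppose $\mathsf{DeepFlip}(x)$ outputs some $x'\in\mathbb{F}_2^n$ (i.e., not $\perp$). Then $|F(x',y)|\le\frac{d_0-1}{\delta d_0-1}\gamma n$.
   Context: A bipartite graph is $(c,d)$-regular if left degrees are $c$ and right degrees $d$; $N(S)$ is the neighborhood of $S$. A $(c,d,\alpha,\delta)$-bipartite expander ($\alpha,\delta\in(0,1]$) is a $(c,d)$-regular bipartite graph with $|N(S)|\ge\delta c|S|$ for all $S\subseteq L$, $|S|\le\alpha|L|$. Tanner code: $L=[n]$, for each $v\in R$ a fixed ordering of $N(v)$ defines $x_{N(v)}\in\mathbb{F}_2^d$, and $T(G,C_0)=\{x:x_{N(v)}\in C_0\ \forall v\in R\}$. $F(x,y)=\{i\in[n]:x_i\ne y_i\}$; $U(x)=\{v\in R:x_{N(v)}\notin C_0\}$; $d_H$ is Hamming distance. $\mathsf{Decode}(z)$ is the codeword of $C_0$ closest to $z\in\mathbb{F}_2^d$, ties broken lexicographically. $W=\{\frac{i}{cd_0}:i\in\mathbb{Z},0\le i\le cd_0\}$.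 $\mathsf{DeterFlip}(x,q)$: set $p_1=\dots=p_n=0$; for each $v\in R$, let $w_v=\mathsf{Decode}(x_{N(v)})$; if $1\le d_H(w_v,x_{N(v)})<t$, let $i$ be the smallest element of $N(v)$ where $w_v$ and $x_{N(v)}$ differ and increase $p_i$ by $\frac{t-d_H(w_v,x_{N(v)})}{ct}$; then flip every $x_i$ with $p_i=q$ and return the result. $\mathsf{DeepFlip}(x)$: let $\varepsilon=\frac{\varepsilon_0\delta}{2ct^2}$ and $s=\left\lceil\log\left(\frac{\delta d_0-1}{2(d_0-1)}\right)/\log(1-\varepsilon)\right\rceil$; set $k_{\min}=|R|+1$, $x_{\min}=\perp$. For each $(q_1,\dots,q_s)\in(W\setminus\{0\})^s$: set $x^{(0)}=x$ and for $i=1,\dots,s$ set $x^{(i)}=\mathsf{DeterFlip}(x^{(i-1)},q_i)$; if $|U(x^{(i)})|>c\gamma n$ abandon this sequence; otherwise, if $i=s$ and $|U(x^{(s)})|<k_{\min}$, set $k_{\min}=|U(x^{(s)})|$ and $x_{\min}=x^{(s)}$. Return $x_{\min}$. *)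

theory Defs
  imports Complex_Main "HOL-Library.List_Lexorder"
begin

(* Vectors in F_2^m are bool lists of length m (False = 0, True = 1).
   Left vertex set L = [n] is {0..<n}.
   The graph is given by  nb :: 'r => nat => nat : for v in R, the fixed ordering
   of N(v) is  nb v 0, ..., nb v (d-1). *)

definition hdist :: "bool list \<Rightarrow> bool list \<Rightarrow> nat" where
  "hdist a b = card {j. j < length a \<and> a ! j \<noteq> b ! j}"

definition flip_set :: "bool list \<Rightarrow> bool list \<Rightarrow> nat set" where
  "flip_set x y = {i. i < length x \<and> x ! i \<noteq> y ! i}"

definition adj :: "('r \<Rightarrow> nat \<Rightarrow> nat) \<Rightarrow> nat \<Rightarrow> nat \<Rightarrow> 'r \<Rightarrow> bool" where
  "adj nb d i v \<longleftrightarrow> i \<in> nb v ` {..<d}"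

definition nbhd :: "'r set \<Rightarrow> ('r \<Rightarrow> nat \<Rightarrow> nat) \<Rightarrow> nat \<Rightarrow> nat set \<Rightarrow> 'r set" where
  "nbhd R nb d S = {v \<in> R. \<exists>i\<in>S. adj nb d i v}"

definition bip_regular :: "nat \<Rightarrow> 'r set \<Rightarrow> ('r \<Rightarrow> nat \<Rightarrow> nat) \<Rightarrow> nat \<Rightarrow> nat \<Rightarrow> bool" where
  "bip_regular n R nb c d \<longleftrightarrow>
     finite R \<and>
     (\<forall>v\<in>R. inj_on (nb v) {..<d} \<and> (\<forall>j<d. nb v j < n)) \<and>
     (\<forall>i<n. card {v \<in> R. adj nb d i v} = c)"

definition bip_expander :: "nat \<Rightarrow> 'r set \<Rightarrow> ('r \<Rightarrow> nat \<Rightarrow> nat) \<Rightarrow> nat \<Rightarrow> nat \<Rightarrow> real \<Rightarrow> real \<Rightarrow> bool" where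
  "bip_expander n R nb c d \<alpha> \<delta> \<longleftrightarrow>
     bip_regular n R nb c d \<and> 0 < \<alpha> \<and> \<alpha> \<le> 1 \<and> 0 < \<delta> \<and> \<delta> \<le> 1 \<and>
     (\<forall>S. S \<subseteq> {..<n} \<and> real (card S) \<le> \<alpha> * real n \<longrightarrow>
          real (card (nbhd R nb d S)) \<ge> \<delta> * real c * real (card S))"

definition linear_code :: "nat \<Rightarrow> bool list set \<Rightarrow> bool" where
  "linear_code d C0 \<longleftrightarrow> C0 \<subseteq> {w. length w = d} \<and> replicate d False \<in> C0 \<and>
     (\<forall>a\<in>C0. \<forall>b\<in>C0. map2 (\<noteq>) a b \<in> C0)"

definition has_min_distance :: "bool list set \<Rightarrow> nat \<Rightarrow> bool" where
  "has_min_distance C0 d0 \<longleftrightarrow> (\<exists>a\<in>C0. \<exists>b\<in>C0. a \<noteq> b) \<and>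
     d0 = Min {hdist a b | a b. a \<in> C0 \<and> b \<in> C0 \<and> a \<noteq> b}"

definition local_view :: "('r \<Rightarrow> nat \<Rightarrow> nat) \<Rightarrow> nat \<Rightarrow> bool list \<Rightarrow> 'r \<Rightarrow> bool list" where
  "local_view nb d x v = map (\<lambda>j. x ! nb v j) [0..<d]"

definition tanner_code :: "nat \<Rightarrow> 'r set \<Rightarrow> ('r \<Rightarrow> nat \<Rightarrow> nat) \<Rightarrow> nat \<Rightarrow> bool list set \<Rightarrow> bool list set" where
  "tanner_code n R nb d C0 = {x. length x = n \<and> (\<forall>v\<in>R. local_view nb d x v \<in> C0)}"

definition unsat :: "'r set \<Rightarrow> ('r \<Rightarrow> nat \<Rightarrow> nat) \<Rightarrow> nat \<Rightarrow> bool list set \<Rightarrow> bool list \<Rightarrow> 'r set" where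
  "unsat R nb d C0 x = {v \<in> R. local_view nb d x v \<notin> C0}"

(* closest codeword, ties broken lexicographically (False < True) *)
definition decode :: "bool list set \<Rightarrow> bool list \<Rightarrow> bool list" where
  "decode C0 z = Min {w \<in> C0. \<forall>w'\<in>C0. hdist w z \<le> hdist w' z}"

definition first_diff :: "('r \<Rightarrow> nat \<Rightarrow> nat) \<Rightarrow> nat \<Rightarrow> bool list \<Rightarrow> bool list \<Rightarrow> 'r \<Rightarrow> nat" where
  "first_diff nb d w xv v = Min {nb v j | j. j < d \<and> w ! j \<noteq> xv ! j}"

definition deter_p :: "'r set \<Rightarrow> ('r \<Rightarrow> nat \<Rightarrow> nat) \<Rightarrow> nat \<Rightarrow> nat \<Rightarrow> bool list set \<Rightarrow> real
                        \<Rightarrow> bool list \<Rightarrow> nat \<Rightarrow> real" where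
  "deter_p R nb c d C0 t x i =
     (\<Sum>v\<in>R. let xv = local_view nb d x v; w = decode C0 xv; k = hdist w xv in
        if 1 \<le> k \<and> real k < t \<and> i = first_diff nb d w xv v
        then (t - real k) / (real c * t) else 0)"

definition deter_flip :: "'r set \<Rightarrow> ('r \<Rightarrow> nat \<Rightarrow> nat) \<Rightarrow> nat \<Rightarrow> nat \<Rightarrow> bool list set \<Rightarrow> real
                          \<Rightarrow> bool list \<Rightarrow> real \<Rightarrow> bool list" where
  "deter_flip R nb c d C0 t x q =
     map (\<lambda>i. if deter_p R nb c d C0 t x i = q then \<not> x ! i else x ! i) [0..<length x]"

definition flip_traj :: "'r set \<Rightarrow> ('r \<Rightarrow> nat \<Rightarrow> nat) \<Rightarrow> nat \<Rightarrow> nat \<Rightarrow> bool list set \<Rightarrow> real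
                         \<Rightarrow> bool list \<Rightarrow> real list \<Rightarrow> nat \<Rightarrow> bool list" where
  "flip_traj R nb c d C0 t x qs k = foldl (\<lambda>z q. deter_flip R nb c d C0 t z q) x (take k qs)"

definition Wset :: "nat \<Rightarrow> nat \<Rightarrow> real set" where
  "Wset c d0 = {real i / (real c * real d0) | i. i \<le> c * d0}"

definition deep_rounds :: "nat \<Rightarrow> nat \<Rightarrow> real \<Rightarrow> real \<Rightarrow> real \<Rightarrow> nat" where
  "deep_rounds c d0 t \<delta> \<epsilon>0 =
     (let \<epsilon> = \<epsilon>0 * \<delta> / (2 * real c * t ^ 2) in
      nat \<lceil>ln ((\<delta> * real d0 - 1) / (2 * (real d0 - 1))) / ln (1 - \<epsilon>)\<rceil>)"

(* a sequence (q_1..q_s) in (W - {0})^s that is not abandoned *)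
definition deep_valid :: "nat \<Rightarrow> 'r set \<Rightarrow> ('r \<Rightarrow> nat \<Rightarrow> nat) \<Rightarrow> nat \<Rightarrow> nat \<Rightarrow> bool list set \<Rightarrow> nat
                          \<Rightarrow> real \<Rightarrow> real \<Rightarrow> real \<Rightarrow> real \<Rightarrow> bool list \<Rightarrow> real list \<Rightarrow> bool" where
  "deep_valid n R nb c d C0 d0 t \<delta> \<epsilon>0 \<gamma> x qs \<longleftrightarrow>
     (let s = deep_rounds c d0 t \<delta> \<epsilon>0 in
      length qs = s \<and> set qs \<subseteq> Wset c d0 - {0} \<and>
      (\<forall>i\<in>{1..s}. real (card (unsat R nb d C0 (flip_traj R nb c d C0 t x qs i)))
                     \<le> real c * \<gamma> * real n))"

(* DeepFlip(x) returns x' (not \<bottom>): x' = x^(s) for a non-abandoned sequence whose |U(x^(s))|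
   is minimal among all non-abandoned sequences (the enumeration order of (W-{0})^s is left
   unspecified, so every such minimiser is a possible output). *)
definition deep_flip_outputs :: "nat \<Rightarrow> 'r set \<Rightarrow> ('r \<Rightarrow> nat \<Rightarrow> nat) \<Rightarrow> nat \<Rightarrow> nat \<Rightarrow> bool list set \<Rightarrow> nat
                          \<Rightarrow> real \<Rightarrow> real \<Rightarrow> real \<Rightarrow> real \<Rightarrow> bool list \<Rightarrow> bool list \<Rightarrow> bool" where
  "deep_flip_outputs n R nb c d C0 d0 t \<delta> \<epsilon>0 \<gamma> x x' \<longleftrightarrow>
     (let s = deep_rounds c d0 t \<delta> \<epsilon>0 in
      \<exists>qs. deep_valid n R nb c d C0 d0 t \<delta> \<epsilon>0 \<gamma> x qs \<and> x' = flip_traj R nb c d C0 t x qs s \<and>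
        (\<forall>qs'. deep_valid n R nb c d C0 d0 t \<delta> \<epsilon>0 \<gamma> x qs' \<longrightarrow>
           card (unsat R nb d C0 x') \<le> card (unsat R nb d C0 (flip_traj R nb c d C0 t x qs' s))))"

end

theory Submission
  imports Defs
begin

(* Let F be the set of positions where the current word differs from y.
   Expansion: while |F| <= alpha n, every check seeing between 1 and d0 - 1 errors is
   unsatisfied, and counting the c |F| edges out of F gives (delta d0 - 1) c |F| <= (d0 - 1) |U|.
   Growth: a DeterFlip step with q <> 0 only creates errors at positions proposed by checks
   whose local view lies within t of a codeword different from the local view of y; such a
   check sees at least d0 - t >= t errors, so there are at most c |F| / t of them and |F|
   grows by a factor at most 1 + c/t.
   Hence |F| stays below B = alpha n / (1 + c/t) along the whole trajectory: one step keeps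
   it below alpha n, and then expansion together with |U| <= c gamma n, which holds because the
   sequence was not abandoned, pushes it back below B. *)

lemma hdist_self [simp]: "hdist a a = 0"
  by (simp add: hdist_def)

lemma hdist_pos:
  assumes "length a = length b" "a \<noteq> b"
  shows "0 < hdist a b"
proof -
  obtain j where "j < length a" "a ! j \<noteq> b ! j"
    using assms nth_equalityI by blast
  then show ?thesis
    unfolding hdist_def by (subst card_gt_0_iff) auto
qed

lemma hdist_triangle:
  assumes "length a = length b" "length b = length c"
  shows "hdist a c \<le> hdist a b + hdist b c"
proof -
  have "{j. j < length a \<and> a ! j \<noteq> c ! j}
      \<subseteq> {j. j < length a \<and> a ! j \<noteq> b ! j} \<union> {j. j < length b \<and> b ! j \<noteq> c ! j}"
    using assms by auto
  then have "hdist a c \<le> card ({j. j < length a \<and> a ! j \<noteq> b ! j} \<union> {j. j < length b \<and> b ! j \<noteq> c ! j})"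
    unfolding hdist_def by (intro card_mono) auto
  also have "\<dots> \<le> hdist a b + hdist b c"
    unfolding hdist_def by (rule card_Un_le)
  finally show ?thesis .
qed

lemma card_flip_set_eq_hdist: "card (flip_set x y) = hdist x y"
  by (simp add: flip_set_def hdist_def)

lemma linear_code_finite: "linear_code d C0 \<Longrightarrow> finite C0"
  using finite_lists_length_eq[of "UNIV :: bool set" d]
  by (auto simp: linear_code_def intro: finite_subset)

lemma length_code_word: "linear_code d C0 \<Longrightarrow> w \<in> C0 \<Longrightarrow> length w = d"
  by (auto simp: linear_code_def)

lemma finite_code_distances:
  "linear_code d C0 \<Longrightarrow> finite {hdist a b | a b. a \<in> C0 \<and> b \<in> C0 \<and> a \<noteq> b}"
  by (rule finite_subset[of _ "(\<lambda>(a, b). hdist a b) ` (C0 \<times> C0)"])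
     (auto simp: linear_code_finite)

lemma min_distance_le_hdist:
  assumes "linear_code d C0" "has_min_distance C0 d0" "a \<in> C0" "b \<in> C0" "a \<noteq> b"
  shows "d0 \<le> hdist a b"
  using assms finite_code_distances[OF assms(1)] unfolding has_min_distance_def
  by (auto intro: Min_le)

lemma min_distance_pos:
  assumes "linear_code d C0" "has_min_distance C0 d0"
  shows "0 < d0"
proof -
  let ?D = "{hdist a b | a b. a \<in> C0 \<and> b \<in> C0 \<and> a \<noteq> b}"
  have "Min ?D \<in> ?D"
    using assms finite_code_distances[OF assms(1)] unfolding has_min_distance_def
    by (intro Min_in) auto
  then show ?thesis
    using assms length_code_word[OF assms(1)]
    by (auto intro!: hdist_pos simp: has_min_distance_def)
qed

lemma decode_in_code:
  assumes "linear_code d C0"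
  shows "decode C0 z \<in> C0"
proof -
  have fin: "finite C0" and ne: "C0 \<noteq> {}"
    using assms by (auto simp: linear_code_finite linear_code_def)
  then have "Min ((\<lambda>w. hdist w z) ` C0) \<in> (\<lambda>w. hdist w z) ` C0"
    by (intro Min_in) auto
  then obtain w where "w \<in> C0" "hdist w z = Min ((\<lambda>w. hdist w z) ` C0)"
    by auto
  then have "w \<in> {w \<in> C0. \<forall>w'\<in>C0. hdist w z \<le> hdist w' z}"
    using fin by auto
  then have "decode C0 z \<in> {w \<in> C0. \<forall>w'\<in>C0. hdist w z \<le> hdist w' z}"
    unfolding decode_def using fin by (intro Min_in) auto
  then show ?thesis by simp
qed

definition deg_into :: "('r \<Rightarrow> nat \<Rightarrow> nat) \<Rightarrow> nat \<Rightarrow> nat set \<Rightarrow> 'r \<Rightarrow> nat" where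
  "deg_into nb d S v = card {j. j < d \<and> nb v j \<in> S}"

lemma deg_into_eq_card_adj:
  assumes "inj_on (nb v) {..<d}"
  shows "deg_into nb d S v = card {i \<in> S. adj nb d i v}"
proof -
  have "{i \<in> S. adj nb d i v} = nb v ` {j. j < d \<and> nb v j \<in> S}"
    by (auto simp: adj_def)
  moreover have "inj_on (nb v) {j. j < d \<and> nb v j \<in> S}"
    using assms by (rule inj_on_subset) auto
  ultimately show ?thesis
    by (simp add: deg_into_def card_image)
qed

lemma sum_deg_into:
  assumes reg: "bip_regular n R nb c d" and S: "S \<subseteq> {..<n}"
  shows "(\<Sum>v\<in>R. deg_into nb d S v) = c * card S"
proof -
  have fin: "finite R" "finite S"
    using reg S finite_subset by (auto simp: bip_regular_def)
  have "(\<Sum>v\<in>R. deg_into nb d S v) = (\<Sum>v\<in>R. \<Sum>i\<in>S. if adj nb d i v then 1 else 0)"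
    using reg fin by (intro sum.cong) (auto simp: bip_regular_def deg_into_eq_card_adj sum.If_cases Int_def)
  also have "\<dots> = (\<Sum>i\<in>S. \<Sum>v\<in>R. if adj nb d i v then 1 else 0)"
    by (rule sum.swap)
  also have "\<dots> = (\<Sum>i\<in>S. c)"
    using reg S fin by (intro sum.cong) (auto simp: bip_regular_def sum.If_cases Int_def)
  finally show ?thesis by simp
qed

lemma deg_into_pos_iff:
  assumes "v \<in> R"
  shows "0 < deg_into nb d S v \<longleftrightarrow> v \<in> nbhd R nb d S"
  using assms by (auto simp: deg_into_def nbhd_def adj_def card_gt_0_iff)

lemma sum_nbhd_deg_into:
  assumes "bip_regular n R nb c d" "S \<subseteq> {..<n}"
  shows "(\<Sum>v\<in>nbhd R nb d S. deg_into nb d S v) = c * card S"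
proof -
  have "(\<Sum>v\<in>nbhd R nb d S. deg_into nb d S v) = (\<Sum>v\<in>R. deg_into nb d S v)"
    using assms(1) deg_into_pos_iff[of _ R nb d S]
    by (intro sum.mono_neutral_left) (auto simp: bip_regular_def nbhd_def)
  with sum_deg_into[OF assms] show ?thesis by simp
qed

text \<open>Each neighbour of S has degree at least 1 into S, and at least d0 unless it is counted
  on the right.\<close>

lemma nbhd_low_degree_count:
  assumes "bip_regular n R nb c d" "S \<subseteq> {..<n}"
  shows "real d0 * card (nbhd R nb d S)
    \<le> real c * card S + (real d0 - 1) * card {v \<in> nbhd R nb d S. deg_into nb d S v < d0}"
proof -
  define N where "N = nbhd R nb d S"
  define A where "A = {v \<in> N. deg_into nb d S v < d0}"
  have fin: "finite N" "finite A" "A \<subseteq> N"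
    using assms(1) by (auto simp: N_def A_def nbhd_def bip_regular_def)
  have "real d0 * card N - (real d0 - 1) * card A
      = (\<Sum>v\<in>N. real d0 - (real d0 - 1) * (if v \<in> A then 1 else 0))"
    using fin by (simp add: sum_subtractf sum_distrib_left[symmetric] sum.If_cases Int_absorb1)
  also have "\<dots> \<le> (\<Sum>v\<in>N. real (deg_into nb d S v))"
  proof (rule sum_mono)
    fix v assume "v \<in> N"
    then have "1 \<le> deg_into nb d S v"
      using deg_into_pos_iff[of v R nb d S] by (auto simp: N_def nbhd_def)
    then show "real d0 - (real d0 - 1) * (if v \<in> A then 1 else 0) \<le> real (deg_into nb d S v)"
      using \<open>v \<in> N\<close> by (auto simp: A_def)
  qed
  also have "\<dots> = real c * card S"
    using sum_nbhd_deg_into[OF assms] unfolding N_def by (metis of_nat_mult of_nat_sum)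
  finally show ?thesis
    unfolding N_def A_def by simp
qed

lemma length_local_view [simp]: "length (local_view nb d x v) = d"
  by (simp add: local_view_def)

lemma nth_local_view [simp]: "j < d \<Longrightarrow> local_view nb d x v ! j = x ! nb v j"
  by (simp add: local_view_def)

lemma hdist_local_view:
  assumes "length z = n" "length y = n" "\<forall>j<d. nb v j < n"
  shows "hdist (local_view nb d z v) (local_view nb d y v) = deg_into nb d (flip_set z y) v"
proof -
  have "{j. j < d \<and> local_view nb d z v ! j \<noteq> local_view nb d y v ! j}
      = {j. j < d \<and> nb v j \<in> flip_set z y}"
    using assms by (auto simp: flip_set_def)
  then show ?thesis
    by (simp add: hdist_def deg_into_def)
qed

section \<open>Expansion\<close>

lemma low_degree_check_unsat:
  assumes reg: "bip_regular n R nb c d"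
    and lc: "linear_code d C0" and md: "has_min_distance C0 d0"
    and z: "length z = n" and y: "y \<in> tanner_code n R nb d C0"
    and v: "v \<in> R"
    and deg: "0 < deg_into nb d (flip_set z y) v" "deg_into nb d (flip_set z y) v < d0"
  shows "v \<in> unsat R nb d C0 z"
proof (rule ccontr)
  assume "v \<notin> unsat R nb d C0 z"
  then have zv: "local_view nb d z v \<in> C0"
    using v by (simp add: unsat_def)
  have yv: "local_view nb d y v \<in> C0" and "length y = n"
    using y v by (auto simp: tanner_code_def)
  then have dist: "hdist (local_view nb d z v) (local_view nb d y v) = deg_into nb d (flip_set z y) v"
    using reg v z by (intro hdist_local_view) (auto simp: bip_regular_def)
  then have "local_view nb d z v \<noteq> local_view nb d y v"
    using deg(1) by auto
  then have "d0 \<le> deg_into nb d (flip_set z y) v"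
    using min_distance_le_hdist[OF lc md zv yv] dist by simp
  with deg(2) show False by simp
qed

lemma expander_card_flip_set_le_unsat:
  assumes exp: "bip_expander n R nb c d \<alpha> \<delta>"
    and lc: "linear_code d C0" and md: "has_min_distance C0 d0"
    and z: "length z = n" and y: "y \<in> tanner_code n R nb d C0"
    and small: "real (card (flip_set z y)) \<le> \<alpha> * real n"
  shows "(\<delta> * real d0 - 1) * real c * real (card (flip_set z y))
    \<le> (real d0 - 1) * real (card (unsat R nb d C0 z))"
proof -
  define S where "S = flip_set z y"
  define A where "A = {v \<in> nbhd R nb d S. deg_into nb d S v < d0}"
  have reg: "bip_regular n R nb c d"
    using exp by (simp add: bip_expander_def)
  have S: "S \<subseteq> {..<n}"
    using z by (auto simp: S_def flip_set_def)
  have expand: "\<delta> * real c * real (card S) \<le> real (card (nbhd R nb d S))"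
    using exp S small unfolding bip_expander_def S_def by blast
  have "A \<subseteq> unsat R nb d C0 z"
  proof
    fix v assume "v \<in> A"
    moreover from this have "v \<in> R"
      by (simp add: A_def nbhd_def)
    ultimately show "v \<in> unsat R nb d C0 z"
      using low_degree_check_unsat[OF reg lc md z y] deg_into_pos_iff[of v R nb d S]
      by (simp add: A_def S_def)
  qed
  then have AU: "card A \<le> card (unsat R nb d C0 z)"
    using reg by (intro card_mono) (auto simp: unsat_def bip_regular_def)
  have "real d0 * (\<delta> * real c * real (card S)) \<le> real d0 * real (card (nbhd R nb d S))"
    using expand by (intro mult_left_mono) auto
  also have "\<dots> \<le> real c * card S + (real d0 - 1) * card A"
    using nbhd_low_degree_count[OF reg S] by (simp add: A_def)
  also have "\<dots> \<le> real c * card S + (real d0 - 1) * card (unsat R nb d C0 z)"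
    using AU min_distance_pos[OF lc md] by (intro add_left_mono mult_left_mono) auto
  finally show ?thesis
    by (simp add: S_def algebra_simps)
qed

section \<open>Growth of the error set in one flipping step\<close>

text \<open>The distance k_v from the local view at v to its decoding, and the position i_v whose
  p-value v increases in DeterFlip when 1 <= k_v < t.\<close>

definition local_decode_dist :: "('r \<Rightarrow> nat \<Rightarrow> nat) \<Rightarrow> nat \<Rightarrow> bool list set \<Rightarrow> bool list \<Rightarrow> 'r \<Rightarrow> nat" where
  "local_decode_dist nb d C0 z v =
     hdist (decode C0 (local_view nb d z v)) (local_view nb d z v)"

definition proposed_flip :: "('r \<Rightarrow> nat \<Rightarrow> nat) \<Rightarrow> nat \<Rightarrow> bool list set \<Rightarrow> bool list \<Rightarrow> 'r \<Rightarrow> nat" where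
  "proposed_flip nb d C0 z v =
     first_diff nb d (decode C0 (local_view nb d z v)) (local_view nb d z v) v"

lemma deter_p_neq_0_proposed:
  assumes "deter_p R nb c d C0 t z i \<noteq> 0"
  obtains v where "v \<in> R" "1 \<le> local_decode_dist nb d C0 z v"
    "real (local_decode_dist nb d C0 z v) < t" "proposed_flip nb d C0 z v = i"
proof -
  obtain v where "v \<in> R" and "(let xv = local_view nb d z v; w = decode C0 xv; k = hdist w xv in
      if 1 \<le> k \<and> real k < t \<and> i = first_diff nb d w xv v then (t - real k) / (real c * t) else 0) \<noteq> 0"
    using assms unfolding deter_p_def by (rule sum.not_neutral_contains_not_neutral)
  then show ?thesis
    using that by (auto simp: Let_def local_decode_dist_def proposed_flip_def split: if_splits)
qed

lemma first_diff_differs: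
  assumes "0 < hdist w xv" "length w = d"
  obtains j where "j < d" "first_diff nb d w xv v = nb v j" "w ! j \<noteq> xv ! j"
proof -
  let ?D = "{nb v j | j. j < d \<and> w ! j \<noteq> xv ! j}"
  have "?D \<noteq> {}"
    using assms by (auto simp: hdist_def card_gt_0_iff)
  moreover have "finite ?D"
    by (rule finite_subset[of _ "nb v ` {..<d}"]) auto
  ultimately have "first_diff nb d w xv v \<in> ?D"
    unfolding first_diff_def by (rule Min_in[rotated])
  then show ?thesis
    using that by auto
qed

lemma proposing_check_deg_into:
  assumes reg: "bip_regular n R nb c d"
    and lc: "linear_code d C0" and md: "has_min_distance C0 d0"
    and z: "length z = n" and y: "y \<in> tanner_code n R nb d C0" and v: "v \<in> R"
    and k: "1 \<le> local_decode_dist nb d C0 z v"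
    and i: "proposed_flip nb d C0 z v \<notin> flip_set z y"
  shows "d0 \<le> local_decode_dist nb d C0 z v + deg_into nb d (flip_set z y) v"
proof -
  define xv where "xv = local_view nb d z v"
  define w where "w = decode C0 xv"
  define yv where "yv = local_view nb d y v"
  have nb: "\<forall>j<d. nb v j < n"
    using reg v by (simp add: bip_regular_def)
  have w: "w \<in> C0" "length w = d"
    using decode_in_code[OF lc] lc by (auto simp: w_def length_code_word)
  have yv: "yv \<in> C0" "length y = n"
    using y v by (auto simp: yv_def tanner_code_def)
  obtain j where j: "j < d" "proposed_flip nb d C0 z v = nb v j" "w ! j \<noteq> xv ! j"
    using first_diff_differs[of w xv d nb v] k w(2)
    unfolding local_decode_dist_def proposed_flip_def w_def xv_def by auto
  \<comment> \<open>y agrees with z at the proposed position, where w does not\<close>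
  then have "w \<noteq> yv"
    using i nb z by (auto simp: yv_def xv_def flip_set_def)
  then have "d0 \<le> hdist w yv"
    using min_distance_le_hdist[OF lc md w(1) yv(1)] by simp
  also have "\<dots> \<le> hdist w xv + hdist xv yv"
    using w by (intro hdist_triangle) (auto simp: xv_def yv_def)
  also have "\<dots> = local_decode_dist nb d C0 z v + deg_into nb d (flip_set z y) v"
    using hdist_local_view[of z n y d nb v, OF z yv(2) nb]
    by (simp add: local_decode_dist_def w_def xv_def yv_def)
  finally show ?thesis .
qed

lemma length_deter_flip [simp]: "length (deter_flip R nb c d C0 t x q) = length x"
  by (simp add: deter_flip_def)

lemma card_flip_set_deter_flip_le:
  assumes reg: "bip_regular n R nb c d"
    and lc: "linear_code d C0" and md: "has_min_distance C0 d0"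
    and z: "length z = n" and y: "y \<in> tanner_code n R nb d C0"
    and q: "q \<noteq> 0" and t: "0 < t" "2 * t \<le> real d0"
  shows "real (card (flip_set (deter_flip R nb c d C0 t z q) y))
    \<le> (1 + real c / t) * real (card (flip_set z y))"
proof -
  define F where "F = flip_set z y"
  define V where "V = {v \<in> R. 1 \<le> local_decode_dist nb d C0 z v
    \<and> real (local_decode_dist nb d C0 z v) < t \<and> proposed_flip nb d C0 z v \<notin> F}"
  have fin: "finite R" "finite V" "finite F"
    using reg z by (auto simp: bip_regular_def V_def F_def flip_set_def)
  have F: "F \<subseteq> {..<n}"
    using z by (auto simp: F_def flip_set_def)
  have new: "flip_set (deter_flip R nb c d C0 t z q) y \<subseteq> F \<union> proposed_flip nb d C0 z ` V"
  proof
    fix i assume i: "i \<in> flip_set (deter_flip R nb c d C0 t z q) y"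
    show "i \<in> F \<union> proposed_flip nb d C0 z ` V"
    proof (cases "i \<in> F")
      case False
      then have "deter_p R nb c d C0 t z i = q"
        using i by (auto simp: F_def flip_set_def deter_flip_def split: if_splits)
      with q obtain v where "v \<in> R" "1 \<le> local_decode_dist nb d C0 z v"
        "real (local_decode_dist nb d C0 z v) < t" "proposed_flip nb d C0 z v = i"
        by (auto elim: deter_p_neq_0_proposed)
      with False show ?thesis
        by (auto simp: V_def)
    qed simp
  qed
  have "t * card V = (\<Sum>v\<in>V. t)"
    by simp
  also have "\<dots> \<le> (\<Sum>v\<in>V. real (deg_into nb d F v))"
  proof (rule sum_mono)
    fix v assume "v \<in> V"
    then show "t \<le> real (deg_into nb d F v)"
      using proposing_check_deg_into[OF reg lc md z y, of v] t by (auto simp: V_def F_def)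
  qed
  also have "\<dots> \<le> (\<Sum>v\<in>R. real (deg_into nb d F v))"
    using fin by (intro sum_mono2) (auto simp: V_def)
  also have "\<dots> = real c * card F"
    using sum_deg_into[OF reg F] by (metis of_nat_mult of_nat_sum)
  finally have V: "real (card V) \<le> real c / t * card F"
    using t by (simp add: field_simps)
  have "card (flip_set (deter_flip R nb c d C0 t z q) y) \<le> card (F \<union> proposed_flip nb d C0 z ` V)"
    using fin by (intro card_mono[OF _ new]) auto
  also have "\<dots> \<le> card F + card (proposed_flip nb d C0 z ` V)"
    by (rule card_Un_le)
  also have "\<dots> \<le> card F + card V"
    using card_image_le[OF fin(2)] by simp
  finally have "card (flip_set (deter_flip R nb c d C0 t z q) y) \<le> card F + card V" .
  with V show ?thesis
    by (simp add: F_def algebra_simps)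
qed

lemma length_flip_traj [simp]: "length (flip_traj R nb c d C0 t x qs i) = length x"
proof -
  have "length (foldl (\<lambda>z q. deter_flip R nb c d C0 t z q) x ps) = length x" for ps
    by (induction ps arbitrary: x) simp_all
  then show ?thesis
    by (simp add: flip_traj_def)
qed

lemma flip_traj_0 [simp]: "flip_traj R nb c d C0 t x qs 0 = x"
  by (simp add: flip_traj_def)

lemma flip_traj_Suc:
  "i < length qs \<Longrightarrow> flip_traj R nb c d C0 t x qs (Suc i)
     = deter_flip R nb c d C0 t (flip_traj R nb c d C0 t x qs i) (qs ! i)"
  by (simp add: flip_traj_def take_Suc_conv_app_nth)

lemma flip_traj_card_flip_set_le:
  assumes exp: "bip_expander n R nb c d \<alpha> \<delta>"
    and lc: "linear_code d C0" and md: "has_min_distance C0 d0"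
    and t: "0 < t" "2 * t \<le> real d0" and \<delta>: "1 < \<delta> * real d0"
    and x: "length x = n" and y: "y \<in> tanner_code n R nb d C0"
    and qs: "0 \<notin> set qs"
    and B0: "real (card (flip_set x y)) \<le> B"
    and B\<alpha>: "(1 + real c / t) * B \<le> \<alpha> * real n"
    and U: "\<And>i. 1 \<le> i \<Longrightarrow> i \<le> length qs \<Longrightarrow>
      (real d0 - 1) * card (unsat R nb d C0 (flip_traj R nb c d C0 t x qs i)) \<le> (\<delta> * real d0 - 1) * real c * B"
  shows "i \<le> length qs \<Longrightarrow> real (card (flip_set (flip_traj R nb c d C0 t x qs i) y)) \<le> B"
proof (induction i)
  case (Suc i)
  define z where "z = flip_traj R nb c d C0 t x qs i"
  define z' where "z' = flip_traj R nb c d C0 t x qs (Suc i)"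
  have reg: "bip_regular n R nb c d"
    using exp by (simp add: bip_expander_def)
  have "qs ! i \<in> set qs"
    using Suc.prems by simp
  then have q: "qs ! i \<noteq> 0"
    using qs by auto
  have "real (card (flip_set z' y)) \<le> (1 + real c / t) * real (card (flip_set z y))"
    unfolding z'_def flip_traj_Suc[OF Suc_le_lessD[OF Suc.prems]] z_def
    using card_flip_set_deter_flip_le[OF reg lc md _ y q t] x by simp
  also have "\<dots> \<le> (1 + real c / t) * B"
    using Suc t by (intro mult_left_mono) (auto simp: z_def)
  finally have grow: "real (card (flip_set z' y)) \<le> (1 + real c / t) * B" .
  have "(\<delta> * real d0 - 1) * (real c * real (card (flip_set z' y)))
      \<le> (real d0 - 1) * real (card (unsat R nb d C0 z'))"
    using expander_card_flip_set_le_unsat[OF exp lc md _ y, of z'] grow B\<alpha> x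
    by (simp add: z'_def mult.assoc)
  also have "\<dots> \<le> (\<delta> * real d0 - 1) * (real c * B)"
    using U[of "Suc i"] Suc.prems by (simp add: z'_def mult.assoc)
  finally have "real c * real (card (flip_set z' y)) \<le> real c * B"
    using \<delta> by (simp only: mult_le_cancel_left_pos diff_gt_0_iff_gt)
  with grow show ?case
    by (cases "c = 0") (auto simp: z'_def)
qed (use B0 in simp)

lemma error_bound_parameters:
  fixes n c d0 :: nat and \<alpha> \<delta> t \<gamma> :: real
  assumes "2 < \<delta> * real d0" "\<delta> \<le> 1" "0 < \<alpha>" "t = real d0 / 2"
    and \<gamma>: "\<gamma> = inverse (1 + real c / t) * ((\<delta> * real d0 - 1) / (real d0 - 1)) * \<alpha>"
  defines "B \<equiv> (real d0 - 1) / (\<delta> * real d0 - 1) * \<gamma> * real n"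
  shows "0 < t" "2 * t \<le> real d0" "1 < \<delta> * real d0"
    and "\<gamma> * real n \<le> B"
    and "(1 + real c / t) * B \<le> \<alpha> * real n"
    and "(real d0 - 1) * (real c * \<gamma> * real n) = (\<delta> * real d0 - 1) * real c * B"
proof -
  have d0: "\<delta> * real d0 - 1 \<le> real d0 - 1" "1 < \<delta> * real d0"
    using assms(1,2) mult_right_mono[of \<delta> 1 "real d0"] by auto
  then show t: "0 < t" "2 * t \<le> real d0" "1 < \<delta> * real d0"
    using assms(4) by auto
  define K where "K = 1 + real c / t"
  have K: "0 < K"
    using t by (simp add: K_def add_pos_nonneg)
  have \<gamma>K: "\<gamma> = inverse K * ((\<delta> * real d0 - 1) / (real d0 - 1)) * \<alpha>"
    using \<gamma> by (simp add: K_def)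
  have "0 \<le> \<gamma>"
    using \<gamma>K d0 K assms(3) by simp
  moreover have "1 \<le> (real d0 - 1) / (\<delta> * real d0 - 1)"
    using d0 by simp
  ultimately have "1 * (\<gamma> * real n) \<le> (real d0 - 1) / (\<delta> * real d0 - 1) * (\<gamma> * real n)"
    by (intro mult_right_mono) auto
  then show "\<gamma> * real n \<le> B"
    by (simp add: B_def mult.assoc)
  have "K * B = \<alpha> * real n"
    unfolding B_def \<gamma>K using d0 K by simp
  then show "(1 + real c / t) * B \<le> \<alpha> * real n"
    by (simp add: K_def)
  show "(real d0 - 1) * (real c * \<gamma> * real n) = (\<delta> * real d0 - 1) * real c * B"
    using d0 by (simp add: B_def field_simps)
qed

theorem lemma4p5:
  fixes n c d d0 :: nat and R :: "'r set" and nb :: "'r \<Rightarrow> nat \<Rightarrow> nat"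
    and C0 :: "bool list set" and \<alpha> \<delta> t \<epsilon>0 \<gamma> :: real and x y x' :: "bool list"
  assumes "\<delta> * real d0 > 2"
    and "t = real d0 / 2"
    and "\<epsilon>0 = real d0 / 2 - 1 / \<delta>"
    and "\<gamma> = inverse (1 + real c / t) * ((\<delta> * real d0 - 1) / (real d0 - 1)) * \<alpha>"
    and "bip_expander n R nb c d \<alpha> \<delta>"
    and "linear_code d C0"
    and "has_min_distance C0 d0"
    and "length x = n"
    and "y \<in> tanner_code n R nb d C0"
    and "real (hdist x y) \<le> \<gamma> * real n"
    and "deep_flip_outputs n R nb c d C0 d0 t \<delta> \<epsilon>0 \<gamma> x x'"
  shows "real (card (flip_set x' y)) \<le> (real d0 - 1) / (\<delta> * real d0 - 1) * \<gamma> * real n"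
proof -
  define s where "s = deep_rounds c d0 t \<delta> \<epsilon>0"
  obtain qs where qs: "length qs = s" "0 \<notin> set qs" and x': "x' = flip_traj R nb c d C0 t x qs s"
    and U: "\<forall>i\<in>{1..s}. real (card (unsat R nb d C0 (flip_traj R nb c d C0 t x qs i))) \<le> real c * \<gamma> * real n"
    using assms(11) by (auto simp: deep_flip_outputs_def deep_valid_def s_def Let_def)
  have "\<delta> \<le> 1" "0 < \<alpha>"
    using assms(5) by (auto simp: bip_expander_def)
  note B = error_bound_parameters[OF assms(1) this assms(2,4)]
  have "real (card (flip_set x y)) \<le> (real d0 - 1) / (\<delta> * real d0 - 1) * \<gamma> * real n"
    using assms(10) B(4)[of n] by (simp add: card_flip_set_eq_hdist)
  moreover have "(real d0 - 1) * card (unsat R nb d C0 (flip_traj R nb c d C0 t x qs i))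
      \<le> (\<delta> * real d0 - 1) * real c * ((real d0 - 1) / (\<delta> * real d0 - 1) * \<gamma> * real n)"
    if "1 \<le> i" "i \<le> length qs" for i
    unfolding B(6)[symmetric] using U that qs(1) min_distance_pos[OF assms(6,7)]
    by (intro mult_left_mono) auto
  ultimately show ?thesis
    using flip_traj_card_flip_set_le[OF assms(5-7) B(1-3) assms(8,9) qs(2) _ B(5)] qs(1)
    by (simp add: x')
qed

end
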